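(* Let $s\in I(\Phi)$. If $C$ is an S-chamber for $s$, then $\mathcal B^s_\bullet(C)=\mathcal B(C)\cap\Phi^s_\bullet$ is a basis of simple roots of the root system $\Phi^s_\bullet$. Moreover, for every Weyl chamber $C'$ of the root system $\Phi^s_\bullet$ there is an S-chamber $C$ for $s$ with $\mathcal B(C)\cap\Phi^s_\bullet=\mathcal B(C')$.
   Context: $\Phi$ is a reduced crystallographic root system spanning a real Euclidean space $V$; $I(\Phi)$ is the set of orthogonal involutions of $V$ preserving $\Phi$. For $s\in I(\Phi)$: $\Phi^s_\bullet=\{\alpha:s\alpha=-\alpha\}$ (a root subsystem), $\Phi^s_\circ=\{\alpha:s\alpha=\alpha\}$, $\Phi^s_\star=\Phi\setminus(\Phi^s_\circ\cup\Phi^s_\bullet)$. For a Weyl chamber $C$ of $\Phi$ (connected component of the complement of the root hyperplanes), $\Phi^+(C)$ is its set of positive roots and $\mathcal B(C)$ its simple roots. $C$ is an S-chamber for $s$ if $s(\Phi^+(C)\cap\Phi^s_\star)\subseteq\Phi^+(C)$. *)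

theory Defs
  imports "HOL-Analysis.Analysis"
begin

definition root_system :: "'a::euclidean_space set \<Rightarrow> bool" where
  "root_system \<Phi> \<longleftrightarrow>
     finite \<Phi> \<and> 0 \<notin> \<Phi> \<and> span \<Phi> = UNIV \<and>
     (\<forall>\<alpha>\<in>\<Phi>. \<forall>\<beta>\<in>\<Phi>. \<beta> - (2 * (\<beta> \<bullet> \<alpha>) / (\<alpha> \<bullet> \<alpha>)) *\<^sub>R \<alpha> \<in> \<Phi>) \<and>
     (\<forall>\<alpha>\<in>\<Phi>. \<forall>\<beta>\<in>\<Phi>. 2 * (\<beta> \<bullet> \<alpha>) / (\<alpha> \<bullet> \<alpha>) \<in> \<int>) \<and>
     (\<forall>\<alpha>\<in>\<Phi>. \<forall>c::real. c *\<^sub>R \<alpha> \<in> \<Phi> \<longrightarrow> c = 1 \<or> c = -1)"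

definition root_involutions :: "'a::euclidean_space set \<Rightarrow> ('a \<Rightarrow> 'a) set" where
  "root_involutions \<Phi> =
     {s. orthogonal_transformation s \<and> (\<forall>x. s (s x) = x) \<and> s ` \<Phi> = \<Phi>}"

definition Phi_bullet :: "('a::real_vector \<Rightarrow> 'a) \<Rightarrow> 'a set \<Rightarrow> 'a set" where
  "Phi_bullet s \<Phi> = {\<alpha>\<in>\<Phi>. s \<alpha> = - \<alpha>}"

definition Phi_circ :: "('a::real_vector \<Rightarrow> 'a) \<Rightarrow> 'a set \<Rightarrow> 'a set" where
  "Phi_circ s \<Phi> = {\<alpha>\<in>\<Phi>. s \<alpha> = \<alpha>}"

definition Phi_star :: "('a::real_vector \<Rightarrow> 'a) \<Rightarrow> 'a set \<Rightarrow> 'a set" where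
  "Phi_star s \<Phi> = \<Phi> - (Phi_circ s \<Phi> \<union> Phi_bullet s \<Phi>)"

definition regular_set :: "'a::euclidean_space set \<Rightarrow> 'a set \<Rightarrow> 'a set" where
  "regular_set R W = W - (\<Union>\<alpha>\<in>R. {x. \<alpha> \<bullet> x = 0})"

definition weyl_chambers :: "'a::euclidean_space set \<Rightarrow> 'a set \<Rightarrow> 'a set set" where
  "weyl_chambers R W =
     {connected_component_set (regular_set R W) x | x. x \<in> regular_set R W}"

definition positive_roots :: "'a::euclidean_space set \<Rightarrow> 'a set \<Rightarrow> 'a set" where
  "positive_roots R C = {\<alpha>\<in>R. \<forall>x\<in>C. 0 < \<alpha> \<bullet> x}"

definition simple_roots :: "'a::euclidean_space set \<Rightarrow> 'a set \<Rightarrow> 'a set" where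
  "simple_roots R C = {\<alpha>\<in>positive_roots R C.
      \<not> (\<exists>\<beta>\<in>positive_roots R C. \<exists>\<gamma>\<in>positive_roots R C. \<alpha> = \<beta> + \<gamma>)}"

definition S_chamber :: "'a::euclidean_space set \<Rightarrow> ('a \<Rightarrow> 'a) \<Rightarrow> 'a set \<Rightarrow> bool" where
  "S_chamber \<Phi> s C \<longleftrightarrow> C \<in> weyl_chambers \<Phi> UNIV \<and>
     s ` (positive_roots \<Phi> C \<inter> Phi_star s \<Phi>) \<subseteq> positive_roots \<Phi> C"

end

theory Submission
  imports Defs
begin

text \<open>
  Both directions reduce to comparing chambers through a point: the positive roots of the
  chamber through a regular point x are the roots that are positive at x. An S-chamber C
  through x restricts to the chamber of \<open>\<Phi>\<^sup>s\<^sub>\<bullet>\<close> through the orthogonal projection of x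
  onto the span of \<open>\<Phi>\<^sup>s\<^sub>\<bullet>\<close>. Conversely, given a regular point y of \<open>\<Phi>\<^sup>s\<^sub>\<bullet>\<close>, choose an
  s-invariant u vanishing exactly on \<open>\<Phi>\<^sup>s\<^sub>\<bullet>\<close>; then x = t u + y for t large is regular, agrees
  with y on \<open>\<Phi>\<^sup>s\<^sub>\<bullet>\<close>, and gives every other root \<beta> the sign of \<beta> \<bullet> u = s \<beta> \<bullet> u, so its chamber
  is an S-chamber. In both cases the positive roots of the two chambers agree on \<open>\<Phi>\<^sup>s\<^sub>\<bullet>\<close>, and
  the S-chamber condition forbids a positive root in \<open>\<Phi>\<^sup>s\<^sub>\<bullet>\<close> from being a sum of two positive
  roots not both in \<open>\<Phi>\<^sup>s\<^sub>\<bullet>\<close>: applying s, such a sum would be positive at x, while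
  \<open>s \<alpha> = - \<alpha>\<close> is negative there.
\<close>

lemma positive_roots_connected_component_iff:
  assumes "x \<in> regular_set R W" "\<alpha> \<in> R"
  shows "\<alpha> \<in> positive_roots R (connected_component_set (regular_set R W) x) \<longleftrightarrow> 0 < \<alpha> \<bullet> x"
proof
  assume "0 < \<alpha> \<bullet> x"
  have "0 < \<alpha> \<bullet> z" if z: "z \<in> connected_component_set (regular_set R W) x" for z
  proof (rule ccontr)
    assume "\<not> 0 < \<alpha> \<bullet> z"
    with \<open>0 < \<alpha> \<bullet> x\<close> obtain v where "v \<in> connected_component_set (regular_set R W) x" "\<alpha> \<bullet> v = 0"
      using connected_ivt_hyperplane[OF connected_connected_component z, of x \<alpha> 0] assms(1)
      by (auto simp: connected_component_refl)
    then show False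
      using assms(2) connected_component_subset unfolding regular_set_def by blast
  qed
  with assms(2) show "\<alpha> \<in> positive_roots R (connected_component_set (regular_set R W) x)"
    unfolding positive_roots_def by blast
qed (use assms(1) connected_component_refl in \<open>auto simp: positive_roots_def\<close>)

lemma positive_roots_restrict_chamber:
  assumes "B \<subseteq> R" "x \<in> regular_set R V" "y \<in> regular_set B W"
    and "\<And>\<alpha>. \<alpha> \<in> B \<Longrightarrow> \<alpha> \<bullet> x = \<alpha> \<bullet> y"
  shows "positive_roots B (connected_component_set (regular_set B W) y) =
         positive_roots R (connected_component_set (regular_set R V) x) \<inter> B"
proof (rule set_eqI)
  fix \<alpha>
  show "\<alpha> \<in> positive_roots B (connected_component_set (regular_set B W) y) \<longleftrightarrow>
        \<alpha> \<in> positive_roots R (connected_component_set (regular_set R V) x) \<inter> B"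
  proof (cases "\<alpha> \<in> B")
    case True
    then show ?thesis
      using assms(1,4) positive_roots_connected_component_iff[OF assms(2)]
        positive_roots_connected_component_iff[OF assms(3)] by auto
  qed (simp add: positive_roots_def)
qed

lemma weyl_chamber_restriction_exists:
  assumes "B \<subseteq> R" "C \<in> weyl_chambers R UNIV"
  shows "\<exists>C'\<in>weyl_chambers B (span B). positive_roots B C' = positive_roots R C \<inter> B"
proof -
  obtain x where x: "x \<in> regular_set R UNIV" and C: "C = connected_component_set (regular_set R UNIV) x"
    using assms(2) unfolding weyl_chambers_def by blast
  obtain p q where p: "p \<in> span B" and q: "\<And>w. w \<in> span B \<Longrightarrow> orthogonal q w" and "x = p + q"
    using orthogonal_subspace_decomp_exists by blast
  have agree: "\<alpha> \<bullet> x = \<alpha> \<bullet> p" if "\<alpha> \<in> B" for \<alpha>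
    using q[OF span_base[OF that]] \<open>x = p + q\<close>
    by (simp add: orthogonal_def inner_add_right inner_commute)
  have "p \<in> regular_set B (span B)"
    using x p agree assms(1) unfolding regular_set_def by fastforce
  then show ?thesis
    using positive_roots_restrict_chamber[OF assms(1) x _ agree] C
    unfolding weyl_chambers_def by blast
qed

lemma S_chamber_image_positive:
  assumes "S_chamber \<Phi> s C" "x \<in> C" "\<beta> \<in> positive_roots \<Phi> C" "\<beta> \<notin> Phi_bullet s \<Phi>"
  shows "0 < s \<beta> \<bullet> x"
proof (cases "s \<beta> = \<beta>")
  case False
  with assms(3,4) have "\<beta> \<in> Phi_star s \<Phi>"
    unfolding Phi_star_def Phi_circ_def positive_roots_def by auto
  with assms(1,3) have "s \<beta> \<in> positive_roots \<Phi> C"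
    unfolding S_chamber_def by blast
  with assms(2) show ?thesis unfolding positive_roots_def by blast
qed (use assms(2,3) in \<open>auto simp: positive_roots_def\<close>)

lemma simple_roots_inter_Phi_bullet:
  assumes "linear s" "S_chamber \<Phi> s C"
    and restrict: "positive_roots (Phi_bullet s \<Phi>) C' = positive_roots \<Phi> C \<inter> Phi_bullet s \<Phi>"
  shows "simple_roots \<Phi> C \<inter> Phi_bullet s \<Phi> = simple_roots (Phi_bullet s \<Phi>) C'"
proof
  show "simple_roots \<Phi> C \<inter> Phi_bullet s \<Phi> \<subseteq> simple_roots (Phi_bullet s \<Phi>) C'"
    using restrict unfolding simple_roots_def by blast
next
  let ?P = "positive_roots \<Phi> C" and ?B = "Phi_bullet s \<Phi>"
  obtain x where x: "x \<in> C"
    using assms(2) connected_component_refl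
    unfolding S_chamber_def weyl_chambers_def by blast
  have no_split: "\<not> (\<exists>\<beta>\<in>?P. \<exists>\<gamma>\<in>?P. \<alpha> = \<beta> + \<gamma>)"
    if \<alpha>: "\<alpha> \<in> simple_roots ?B C'" for \<alpha>
  proof
    assume "\<exists>\<beta>\<in>?P. \<exists>\<gamma>\<in>?P. \<alpha> = \<beta> + \<gamma>"
    then obtain \<beta> \<gamma> where \<beta>: "\<beta> \<in> ?P" and \<gamma>: "\<gamma> \<in> ?P" and sum: "\<alpha> = \<beta> + \<gamma>" by blast
    have "\<alpha> \<in> ?P \<inter> ?B" using \<alpha> restrict unfolding simple_roots_def by blast
    then have s_sum: "s \<beta> + s \<gamma> = - \<beta> - \<gamma>" and "0 < \<alpha> \<bullet> x"
      using x sum linear_add[OF assms(1)]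
      unfolding Phi_bullet_def positive_roots_def by auto
    have "s \<gamma> + \<gamma> = - (s \<beta> + \<beta>)"
      using s_sum by (simp add: algebra_simps)
    then have "s \<beta> = - \<beta> \<longleftrightarrow> s \<gamma> = - \<gamma>"
      by (metis eq_neg_iff_add_eq_0 neg_equal_0_iff_equal)
    then have "\<beta> \<in> ?B \<longleftrightarrow> \<gamma> \<in> ?B"
      using \<beta> \<gamma> by (auto simp: Phi_bullet_def positive_roots_def)
    moreover have "\<not> (\<beta> \<in> ?B \<and> \<gamma> \<in> ?B)"
      using \<alpha> \<beta> \<gamma> sum restrict unfolding simple_roots_def by blast
    ultimately have "\<beta> \<notin> ?B \<and> \<gamma> \<notin> ?B" by blast
    then have "0 < s \<beta> \<bullet> x + s \<gamma> \<bullet> x"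
      using S_chamber_image_positive[OF assms(2) x] \<beta> \<gamma> by (simp add: add_pos_pos)
    also have "\<dots> = (s \<beta> + s \<gamma>) \<bullet> x"
      by (simp add: inner_add_left)
    also have "\<dots> = - (\<alpha> \<bullet> x)"
      using s_sum sum by (simp add: inner_add_left inner_diff_left)
    finally show False using \<open>0 < \<alpha> \<bullet> x\<close> by simp
  qed
  show "simple_roots ?B C' \<subseteq> simple_roots \<Phi> C \<inter> ?B"
    using no_split restrict unfolding simple_roots_def by blast
qed

lemma finite_set_nonorthogonal_vector:
  fixes A :: "'a::euclidean_space set"
  assumes "finite A" "0 \<notin> A"
  obtains w where "\<And>a. a \<in> A \<Longrightarrow> a \<bullet> w \<noteq> 0"
proof -
  have "negligible (\<Union>a\<in>A. {w. a \<bullet> w = 0})"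
    using assms by (intro negligible_Union) (auto intro!: negligible_hyperplane)
  then have "(\<Union>a\<in>A. {w. a \<bullet> w = 0}) \<noteq> UNIV" by auto
  then show thesis using that by blast
qed

lemma orthogonal_involution_separating_vector:
  fixes s :: "'a::euclidean_space \<Rightarrow> 'a"
  assumes "orthogonal_transformation s" "\<And>x. s (s x) = x" "finite A"
  obtains u where "\<And>v. s v \<bullet> u = v \<bullet> u" "\<And>\<beta>. \<beta> \<in> A \<Longrightarrow> \<beta> \<bullet> u = 0 \<longleftrightarrow> s \<beta> = - \<beta>"
proof -
  have adjoint: "v \<bullet> s w = s v \<bullet> w" for v w
  proof -
    have "s (s v) \<bullet> s w = s v \<bullet> w"
      using assms(1) by (simp add: orthogonal_transformation_def)
    then show ?thesis using assms(2) by simp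
  qed
  let ?N = "(\<lambda>\<beta>. \<beta> + s \<beta>) ` {\<beta>\<in>A. s \<beta> \<noteq> - \<beta>}"
  have "0 \<notin> ?N" by (auto simp: add_eq_0_iff)
  with assms(3) obtain w where w: "\<And>a. a \<in> ?N \<Longrightarrow> a \<bullet> w \<noteq> 0"
    using finite_set_nonorthogonal_vector[of ?N] by auto
  \<comment> \<open>averaging w over the group generated by s gives \<open>\<beta> \<bullet> u = (\<beta> + s \<beta>) \<bullet> w\<close>\<close>
  define u where "u = w + s w"
  have u: "v \<bullet> u = (v + s v) \<bullet> w" for v
    unfolding u_def by (simp add: inner_add_left inner_add_right adjoint)
  show thesis
  proof (rule that)
    show "s v \<bullet> u = v \<bullet> u" for v
      using u[of v] u[of "s v"] assms(2) by (metis add.commute)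
    show "\<beta> \<bullet> u = 0 \<longleftrightarrow> s \<beta> = - \<beta>" if "\<beta> \<in> A" for \<beta>
    proof
      assume "\<beta> \<bullet> u = 0"
      then show "s \<beta> = - \<beta>" using u[of \<beta>] w[of "\<beta> + s \<beta>"] that by fastforce
    qed (simp add: u)
  qed
qed

lemma large_multiple_dominates_sign:
  fixes u y :: "'a::real_inner"
  assumes "finite D" "\<And>\<beta>. \<beta> \<in> D \<Longrightarrow> \<beta> \<bullet> u \<noteq> 0"
  obtains t where "\<And>\<beta>. \<beta> \<in> D \<Longrightarrow> \<beta> \<bullet> (t *\<^sub>R u + y) \<noteq> 0 \<and> (0 < \<beta> \<bullet> (t *\<^sub>R u + y) \<longleftrightarrow> 0 < \<beta> \<bullet> u)"
proof -
  define t where "t = 1 + (\<Sum>\<beta>\<in>D. \<bar>\<beta> \<bullet> y\<bar> / \<bar>\<beta> \<bullet> u\<bar>)"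
  have "\<beta> \<bullet> (t *\<^sub>R u + y) \<noteq> 0 \<and> (0 < \<beta> \<bullet> (t *\<^sub>R u + y) \<longleftrightarrow> 0 < \<beta> \<bullet> u)"
    if "\<beta> \<in> D" for \<beta>
  proof -
    have "\<bar>\<beta> \<bullet> y\<bar> / \<bar>\<beta> \<bullet> u\<bar> < t"
      using member_le_sum[of \<beta> D "\<lambda>\<beta>. \<bar>\<beta> \<bullet> y\<bar> / \<bar>\<beta> \<bullet> u\<bar>"] assms(1) that
      unfolding t_def by auto
    then have "\<bar>\<beta> \<bullet> y\<bar> < t * \<bar>\<beta> \<bullet> u\<bar>"
      using assms(2)[OF that] by (simp add: divide_less_eq mult.commute)
    then show ?thesis
      by (cases "0 < \<beta> \<bullet> u") (auto simp: inner_add_right abs_if split: if_splits)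
  qed
  then show thesis by (rule that)
qed

lemma S_chamber_extension_exists:
  assumes "finite \<Phi>" "s \<in> root_involutions \<Phi>"
    and "C' \<in> weyl_chambers (Phi_bullet s \<Phi>) (span (Phi_bullet s \<Phi>))"
  shows "\<exists>C. S_chamber \<Phi> s C \<and>
    positive_roots (Phi_bullet s \<Phi>) C' = positive_roots \<Phi> C \<inter> Phi_bullet s \<Phi>"
proof -
  let ?B = "Phi_bullet s \<Phi>"
  obtain y where y: "y \<in> regular_set ?B (span ?B)"
    and C': "C' = connected_component_set (regular_set ?B (span ?B)) y"
    using assms(3) unfolding weyl_chambers_def by blast
  have s: "orthogonal_transformation s" "\<And>x. s (s x) = x" "s ` \<Phi> = \<Phi>"
    using assms(2) unfolding root_involutions_def by auto
  obtain u where u_inv: "\<And>v. s v \<bullet> u = v \<bullet> u"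
    and u_zero: "\<And>\<beta>. \<beta> \<in> \<Phi> \<Longrightarrow> \<beta> \<bullet> u = 0 \<longleftrightarrow> s \<beta> = - \<beta>"
    using orthogonal_involution_separating_vector[OF s(1,2) assms(1)] by blast
  define D where "D = \<Phi> - ?B"
  have D: "\<beta> \<in> D \<longleftrightarrow> \<beta> \<in> \<Phi> \<and> \<beta> \<bullet> u \<noteq> 0" for \<beta>
    using u_zero unfolding D_def Phi_bullet_def by auto
  have "finite D" using assms(1) unfolding D_def by blast
  then obtain t where t: "\<And>\<beta>. \<beta> \<in> D \<Longrightarrow>
      \<beta> \<bullet> (t *\<^sub>R u + y) \<noteq> 0 \<and> (0 < \<beta> \<bullet> (t *\<^sub>R u + y) \<longleftrightarrow> 0 < \<beta> \<bullet> u)"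
    using large_multiple_dominates_sign D by metis
  define x where "x = t *\<^sub>R u + y"
  have agree: "\<alpha> \<bullet> x = \<alpha> \<bullet> y" if "\<alpha> \<in> ?B" for \<alpha>
    using that u_zero unfolding x_def Phi_bullet_def by (simp add: inner_add_right)
  have "\<alpha> \<bullet> x \<noteq> 0" if "\<alpha> \<in> \<Phi>" for \<alpha>
  proof (cases "\<alpha> \<in> ?B")
    case True
    then show ?thesis using agree y unfolding regular_set_def by auto
  next
    case False
    then show ?thesis using t[of \<alpha>] that unfolding D_def x_def by blast
  qed
  then have x: "x \<in> regular_set \<Phi> UNIV" unfolding regular_set_def by blast
  define C where "C = connected_component_set (regular_set \<Phi> UNIV) x"
  have "s \<beta> \<in> positive_roots \<Phi> C" if "\<beta> \<in> positive_roots \<Phi> C \<inter> Phi_star s \<Phi>" for \<beta>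
  proof -
    have \<beta>: "\<beta> \<in> \<Phi>" "0 < \<beta> \<bullet> x" "\<beta> \<in> D"
      using that positive_roots_connected_component_iff[OF x]
      unfolding C_def D_def Phi_star_def by auto
    moreover have "s \<beta> \<in> D" "s \<beta> \<in> \<Phi>"
      using \<beta> s(3) u_inv D by auto
    ultimately show ?thesis
      using t u_inv positive_roots_connected_component_iff[OF x]
      unfolding C_def x_def by metis
  qed
  then have "S_chamber \<Phi> s C"
    using x unfolding S_chamber_def weyl_chambers_def C_def by blast
  moreover have "positive_roots ?B C' = positive_roots \<Phi> C \<inter> ?B"
    using positive_roots_restrict_chamber[OF _ x y agree] C'
    unfolding C_def Phi_bullet_def by blast
  ultimately show ?thesis by blast
qed

theorem proposition2p32:
  fixes \<Phi> :: "'a::euclidean_space set" and s :: "'a \<Rightarrow> 'a"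
  assumes "root_system \<Phi>"
    and "s \<in> root_involutions \<Phi>"
  shows "(\<forall>C. S_chamber \<Phi> s C \<longrightarrow>
            (\<exists>C'\<in>weyl_chambers (Phi_bullet s \<Phi>) (span (Phi_bullet s \<Phi>)).
               simple_roots \<Phi> C \<inter> Phi_bullet s \<Phi> = simple_roots (Phi_bullet s \<Phi>) C'))
       \<and> (\<forall>C'\<in>weyl_chambers (Phi_bullet s \<Phi>) (span (Phi_bullet s \<Phi>)).
            \<exists>C. S_chamber \<Phi> s C \<and>
               simple_roots \<Phi> C \<inter> Phi_bullet s \<Phi> = simple_roots (Phi_bullet s \<Phi>) C')"
proof -
  let ?B = "Phi_bullet s \<Phi>"
  have "linear s"
    using assms(2) orthogonal_transformation unfolding root_involutions_def by blast
  have "finite \<Phi>" using assms(1) unfolding root_system_def by blast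
  have "?B \<subseteq> \<Phi>" unfolding Phi_bullet_def by blast
  show ?thesis
  proof (intro conjI ballI allI impI)
    fix C assume "S_chamber \<Phi> s C"
    then obtain C' where "C' \<in> weyl_chambers ?B (span ?B)"
      and "positive_roots ?B C' = positive_roots \<Phi> C \<inter> ?B"
      using weyl_chamber_restriction_exists[OF \<open>?B \<subseteq> \<Phi>\<close>] unfolding S_chamber_def by blast
    then show "\<exists>C'\<in>weyl_chambers ?B (span ?B). simple_roots \<Phi> C \<inter> ?B = simple_roots ?B C'"
      using simple_roots_inter_Phi_bullet[OF \<open>linear s\<close> \<open>S_chamber \<Phi> s C\<close>] by blast
  next
    fix C' assume "C' \<in> weyl_chambers ?B (span ?B)"
    then obtain C where "S_chamber \<Phi> s C" and "positive_roots ?B C' = positive_roots \<Phi> C \<inter> ?B"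
      using S_chamber_extension_exists[OF \<open>finite \<Phi>\<close> assms(2)] by blast
    then show "\<exists>C. S_chamber \<Phi> s C \<and> simple_roots \<Phi> C \<inter> ?B = simple_roots ?B C'"
      using simple_roots_inter_Phi_bullet[OF \<open>linear s\<close>] by blast
  qed
qed

end
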